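(* There is a constant $c>0$ such that for every $i\ge1$, the $i$-bit roof game $G_{i\text{-bit}}$ on $n=4i$ players has at most $c\,n^5$ ceiling coalitions (while it has $2^{i}=2^{n/4}$ roof coalitions).
   Context: Players are $N=\{1,\dots,n\}$, $n=4i$. A coalition $S'$ is a direct left-shift of $S$ if there is $m\in S$, $2\le m\le n$, $m-1\notin S$, with $S'=(S\setminus\{m\})\cup\{m-1\}$; a left-shift is obtained by one or more successive direct left-shifts; right-shifts are defined symmetrically (replacing $m-1$ by $m+1$ and $2\le m\le n$ by $1\le m\le n-1$). For $k\in\{0,\dots,2^i-1\}$ with $i$-bit binary representation $b_1\cdots b_i$, $S_{k,i}=\bigcup_{j=1}^iB_j$ with $B_j=\{4(j-1)+2,4(j-1)+3\}$ if $b_j=0$ and $B_j=\{4(j-1)+1,4(j-1)+4\}$ if $b_j=1$. $G_{i\text{-bit}}$ is the simple game on $N$ in which a coalition is winning iff it contains some $S_{k,i}$ or a left-shift of some $S_{k,i}$; it is a canonical linear game whose roof coalitions (minimal winning coalitions all of whose right-shifts are losing) are exactly the $2^i$ coalitions $S_{k,i}$. A ceiling coalition is a maximal losing coalition (losing $S$ with $S\cup\{m\}$ winning for all $m\notin S$) all of whose left-shifts are winning. *)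

theory Defs
  imports Complex_Main
begin

text \<open>Players are 1..n; coalitions are subsets of {1..n}.
  A simple game on n players is given by its winning predicate W on coalitions.\<close>

definition direct_left_shift :: "nat \<Rightarrow> nat set \<Rightarrow> nat set \<Rightarrow> bool" where
  "direct_left_shift n S S' \<longleftrightarrow>
     (\<exists>m\<in>S. 2 \<le> m \<and> m \<le> n \<and> m - 1 \<notin> S \<and> S' = insert (m - 1) (S - {m}))"

definition direct_right_shift :: "nat \<Rightarrow> nat set \<Rightarrow> nat set \<Rightarrow> bool" where
  "direct_right_shift n S S' \<longleftrightarrow>
     (\<exists>m\<in>S. 1 \<le> m \<and> m \<le> n - 1 \<and> m + 1 \<notin> S \<and> S' = insert (m + 1) (S - {m}))"

definition left_shift :: "nat \<Rightarrow> nat set \<Rightarrow> nat set \<Rightarrow> bool" where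
  "left_shift n = (direct_left_shift n)\<^sup>+\<^sup>+"

definition right_shift :: "nat \<Rightarrow> nat set \<Rightarrow> nat set \<Rightarrow> bool" where
  "right_shift n = (direct_right_shift n)\<^sup>+\<^sup>+"

definition players :: "nat \<Rightarrow> nat set" where
  "players n = {1..n}"

definition ceiling_coalition :: "nat \<Rightarrow> (nat set \<Rightarrow> bool) \<Rightarrow> nat set \<Rightarrow> bool" where
  "ceiling_coalition n W S \<longleftrightarrow>
     S \<subseteq> players n \<and> \<not> W S \<and>
     (\<forall>m \<in> players n - S. W (insert m S)) \<and>
     (\<forall>T. left_shift n S T \<longrightarrow> W T)"

definition roof_coalition :: "nat \<Rightarrow> (nat set \<Rightarrow> bool) \<Rightarrow> nat set \<Rightarrow> bool" where
  "roof_coalition n W S \<longleftrightarrow>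
     S \<subseteq> players n \<and> W S \<and> (\<forall>T. T \<subset> S \<longrightarrow> \<not> W T) \<and>
     (\<forall>T. right_shift n S T \<longrightarrow> \<not> W T)"

text \<open>Bit j (1-based, b_1 most significant) of the i-bit binary representation of k.\<close>
definition bit_of :: "nat \<Rightarrow> nat \<Rightarrow> nat \<Rightarrow> nat" where
  "bit_of i k j = (k div 2 ^ (i - j)) mod 2"

definition block :: "nat \<Rightarrow> nat \<Rightarrow> nat set" where
  "block j b = (if b = 0 then {4 * (j - 1) + 2, 4 * (j - 1) + 3}
                else {4 * (j - 1) + 1, 4 * (j - 1) + 4})"

definition S_ki :: "nat \<Rightarrow> nat \<Rightarrow> nat set" where
  "S_ki k i = (\<Union>j\<in>{1..i}. block j (bit_of i k j))"

definition G_ibit :: "nat \<Rightarrow> nat set \<Rightarrow> bool" where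
  "G_ibit i S \<longleftrightarrow> S \<subseteq> players (4 * i) \<and>
     (\<exists>k < 2 ^ i. \<exists>T. (T = S_ki k i \<or> left_shift (4 * i) (S_ki k i) T) \<and> T \<subseteq> S)"

end

theory Submission
  imports Defs "HOL-Library.FuncSet"
begin

text \<open>A coalition contains a left-shift of A (or A itself) exactly when its prefix counts
  |S \<inter> {1..x}| dominate those of A pointwise. Since every S_{k,i} has exactly 2(j - 1)
  players before block j, domination of some S_{k,i} splits into one independent condition per
  block. A ceiling fails the condition of some block j; by maximality it contains every player
  after block j, and since its left-shifts win, its players before block j form an initial
  segment. Hence a ceiling is determined by j, the length of that segment and a subset of three
  players of block j, which gives at most 8 i (4 i + 1) ceilings. Conversely the two patterns of a
  block have incomparable prefix counts, so a winning coalition dominated by S_{k,i} has exactly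
  its prefix counts; thus proper subsets and right-shifts of S_{k,i} lose, and the roofs are
  exactly the 2^i coalitions S_{k,i}.\<close>

definition prefix_count :: "nat set \<Rightarrow> nat \<Rightarrow> nat" where
  "prefix_count X x = card {y\<in>X. y \<le> x}"

lemma finite_prefix [simp]: "finite {y\<in>X. y \<le> (x::nat)}"
  by (rule finite_subset[of _ "{..x}"]) auto

lemma prefix_count_mono: "A \<subseteq> B \<Longrightarrow> prefix_count A x \<le> prefix_count B x"
  unfolding prefix_count_def by (rule card_mono) auto

lemma prefix_count_mono_bound: "x \<le> y \<Longrightarrow> prefix_count A x \<le> prefix_count A y"
  unfolding prefix_count_def by (rule card_mono) auto

lemma prefix_count_insert_above: "x < m \<Longrightarrow> prefix_count (insert m S) x = prefix_count S x"
  unfolding prefix_count_def by (rule arg_cong[where f=card]) auto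

lemma prefix_count_psubset_less:
  assumes "T \<subset> S" "m \<in> S - T"
  shows "prefix_count T m < prefix_count S m"
  unfolding prefix_count_def by (rule psubset_card_mono) (use assms in auto)

lemma prefix_count_move:
  assumes "m \<in> S" "m' \<notin> S"
  shows "prefix_count (insert m' (S - {m})) x + (if m \<le> x then 1 else 0)
           = prefix_count S x + (if m' \<le> x then 1 else 0)"
proof -
  have fin: "finite {y\<in>S - {m}. y \<le> x}" by (rule finite_subset[of _ "{..x}"]) auto
  have "{y\<in>S. y \<le> x} = (if m \<le> x then insert m {y\<in>S - {m}. y \<le> x} else {y\<in>S - {m}. y \<le> x})"
    using assms by auto
  moreover have "{y\<in>insert m' (S - {m}). y \<le> x}
      = (if m' \<le> x then insert m' {y\<in>S - {m}. y \<le> x} else {y\<in>S - {m}. y \<le> x})"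
    by auto
  ultimately show ?thesis
    unfolding prefix_count_def using assms fin by auto
qed

lemma direct_left_shift_prefix_count:
  "direct_left_shift n A B \<Longrightarrow> prefix_count A x \<le> prefix_count B x"
proof -
  assume "direct_left_shift n A B"
  then obtain m where m: "m \<in> A" "2 \<le> m" "m - 1 \<notin> A" "B = insert (m - 1) (A - {m})"
    unfolding direct_left_shift_def by blast
  show ?thesis
    using prefix_count_move[OF m(1,3), of x] m(2,4) by (simp split: if_splits)
qed

lemma left_shift_prefix_count:
  "left_shift n A B \<Longrightarrow> prefix_count A x \<le> prefix_count B x"
  unfolding left_shift_def
proof (induction rule: tranclp_induct)
  case (base B)
  then show ?case by (rule direct_left_shift_prefix_count)
next
  case (step B C)
  then show ?case using direct_left_shift_prefix_count[OF step(2), of x] by linarith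
qed

lemma direct_right_shift_prefix_count:
  assumes "direct_right_shift n A B"
  shows "prefix_count B x \<le> prefix_count A x"
    and "\<exists>m. prefix_count B m < prefix_count A m"
proof -
  obtain m where m: "m \<in> A" "m + 1 \<notin> A" "B = insert (m + 1) (A - {m})"
    using assms unfolding direct_right_shift_def by blast
  have count: "prefix_count B y + (if m \<le> y then 1 else 0) = prefix_count A y + (if m + 1 \<le> y then 1 else 0)"
    for y
    using prefix_count_move[OF m(1,2)] m(3) by simp
  from count[of x] show "prefix_count B x \<le> prefix_count A x"
    by (auto split: if_splits)
  from count[of m] show "\<exists>m. prefix_count B m < prefix_count A m"
    by (intro exI[of _ m]) simp
qed

lemma right_shift_prefix_count:
  assumes "right_shift n A B"
  shows "\<forall>x. prefix_count B x \<le> prefix_count A x"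
    and "\<exists>m. prefix_count B m < prefix_count A m"
proof -
  have "prefix_count B x \<le> prefix_count A x \<and> (\<exists>m. prefix_count B m < prefix_count A m)" for x
    using assms unfolding right_shift_def
  proof (induction rule: tranclp_induct)
    case (base B)
    then show ?case using direct_right_shift_prefix_count by blast
  next
    case (step B C)
    then show ?case
      using direct_right_shift_prefix_count(1)[OF step(2)] by (meson le_less_trans le_trans)
  qed
  then show "\<forall>x. prefix_count B x \<le> prefix_count A x"
    and "\<exists>m. prefix_count B m < prefix_count A m" by blast+
qed

lemma direct_left_shift_imp_direct_right_shift:
  "direct_left_shift n A B \<Longrightarrow> direct_right_shift n B A"
  unfolding direct_left_shift_def direct_right_shift_def
proof (elim bexE conjE)
  fix m assume "m \<in> A" "2 \<le> m" "m \<le> n" "m - 1 \<notin> A" "B = insert (m - 1) (A - {m})"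
  then show "\<exists>m'\<in>B. 1 \<le> m' \<and> m' \<le> n - 1 \<and> m' + 1 \<notin> B \<and> A = insert (m' + 1) (B - {m'})"
    by (intro bexI[of _ "m - 1"]) auto
qed

lemma left_shift_imp_right_shift: "left_shift n A B \<Longrightarrow> right_shift n B A"
  unfolding left_shift_def right_shift_def
proof (induction rule: tranclp_induct)
  case (base B)
  then show ?case by (simp add: direct_left_shift_imp_direct_right_shift tranclp.r_into_trancl)
next
  case (step B C)
  then show ?case
    by (meson direct_left_shift_imp_direct_right_shift tranclp.r_into_trancl tranclp_trans)
qed

text \<open>A coalition A dominated by S in all prefix counts but not contained in S can be pushed
  one step towards S: let p be the least element of A - S; some s \<in> S - A lies below p, and
  the least element m of A above s can move to m - 1.\<close>

lemma direct_left_shift_towards_dominating: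
  assumes A: "A \<subseteq> {1..n}" and S: "S \<subseteq> {1..n}"
    and dom: "\<forall>x. prefix_count A x \<le> prefix_count S x" and "\<not> A \<subseteq> S"
  obtains m where "m \<in> A" "2 \<le> m" "m \<le> n" "m - 1 \<notin> A"
    "\<forall>x. prefix_count (insert (m - 1) (A - {m})) x \<le> prefix_count S x"
proof -
  have finA: "finite A" using A finite_subset by blast
  define p where "p = Min (A - S)"
  have p: "p \<in> A" "p \<notin> S" using Min_in[of "A - S"] finA \<open>\<not> A \<subseteq> S\<close> unfolding p_def by auto
  have below_p: "y \<in> S" if "y \<in> A" "y < p" for y
    using Min_le[of "A - S" y] finA that unfolding p_def by (meson DiffI finite_Diff not_le)
  have fin_below_p: "finite {y\<in>A. y < p}" by (rule finite_subset[of _ "{..<p}"]) auto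
  have "{y\<in>A. y \<le> p} = insert p {y\<in>A. y < p}" "{y\<in>S. y \<le> p} = {y\<in>S. y < p}"
    using p by (auto simp: le_less)
  then have "card {y\<in>A. y < p} < card {y\<in>S. y < p}"
    using dom[rule_format, of p] fin_below_p unfolding prefix_count_def by simp
  then have "\<not> {y\<in>S. y < p} \<subseteq> {y\<in>A. y < p}"
    using card_mono[OF fin_below_p] leD by blast
  then obtain s where s: "s \<in> S" "s < p" "s \<notin> A" by blast
  define m where "m = Min {a\<in>A. s < a}"
  have fin_above: "finite {a\<in>A. s < a}" using finA by simp
  have m: "m \<in> A" "s < m" using Min_in[OF fin_above] p s unfolding m_def by auto
  have m_least: "m \<le> a" if "a \<in> A" "s < a" for a
    using Min_le[OF fin_above] that unfolding m_def by simp
  have "1 \<le> s" using s S by auto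
  then have m_bounds: "2 \<le> m" "m \<le> n" using m A by auto
  have m1: "m - 1 \<notin> A"
  proof
    assume "m - 1 \<in> A"
    moreover have "s < m - 1" using m s \<open>m - 1 \<in> A\<close> by (cases "m - 1 = s") auto
    ultimately show False using m_least[of "m - 1"] by linarith
  qed
  have "{y\<in>A. y \<le> m - 1} \<subseteq> {y\<in>S. y \<le> m - 1} - {s}"
  proof
    fix y assume y: "y \<in> {y\<in>A. y \<le> m - 1}"
    then have "\<not> s < y" using m_least[of y] by auto
    then have "y < s" using y s by (cases "y = s") auto
    then show "y \<in> {y\<in>S. y \<le> m - 1} - {s}" using y below_p s by auto
  qed
  moreover have "s \<in> {y\<in>S. y \<le> m - 1}" using s m by auto
  ultimately have "prefix_count A (m - 1) < prefix_count S (m - 1)"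
    unfolding prefix_count_def
    using card_Diff1_less[OF finite_prefix] card_mono[OF finite_Diff[OF finite_prefix]]
    by (meson le_less_trans)
  moreover have move: "prefix_count (insert (m - 1) (A - {m})) x + (if m \<le> x then 1 else 0)
      = prefix_count A x + (if m - 1 \<le> x then 1 else 0)" for x
    using prefix_count_move[OF m(1) m1] .
  ultimately have "prefix_count (insert (m - 1) (A - {m})) x \<le> prefix_count S x" for x
    using dom[rule_format, of x] move[of x] m_bounds
    by (cases "x = m - 1"; cases "m \<le> x"; cases "m - 1 \<le> x") auto
  then show thesis using that m(1) m_bounds m1 by blast
qed

lemma prefix_count_le_imp_left_shift_subset:
  assumes "A \<subseteq> {1..n}" "S \<subseteq> {1..n}" "\<forall>x. prefix_count A x \<le> prefix_count S x"
  shows "\<exists>T\<subseteq>S. T = A \<or> left_shift n A T"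
  using assms
proof (induction "\<Sum>A" arbitrary: A rule: less_induct)
  case less
  show ?case
  proof (cases "A \<subseteq> S")
    case False
    with less.prems obtain m where m: "m \<in> A" "2 \<le> m" "m \<le> n" "m - 1 \<notin> A"
      and dom: "\<forall>x. prefix_count (insert (m - 1) (A - {m})) x \<le> prefix_count S x"
      by (rule direct_left_shift_towards_dominating)
    define A' where "A' = insert (m - 1) (A - {m})"
    have step: "direct_left_shift n A A'"
      unfolding direct_left_shift_def A'_def using m by blast
    have finA: "finite A" using less.prems(1) finite_subset by blast
    have "\<Sum>A' + 1 = \<Sum>A"
      using m finA sum.remove[OF finA m(1), of id] unfolding A'_def by simp
    moreover have "A' \<subseteq> {1..n}" using less.prems(1) m unfolding A'_def by auto
    ultimately obtain T where "T \<subseteq> S" "T = A' \<or> left_shift n A' T"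
      using less.hyps less.prems(2) dom unfolding A'_def by (metis less_add_one)
    then show ?thesis
      using step unfolding left_shift_def by (meson tranclp.r_into_trancl tranclp_into_tranclp2)
  qed blast
qed

lemma bit_of_less_2: "bit_of i k j < 2"
  unfolding bit_of_def by simp

lemma bit_of_inject:
  assumes "k < 2 ^ i" "k' < 2 ^ i" "\<forall>j\<in>{1..i}. bit_of i k j = bit_of i k' j"
  shows "k = k'"
proof (rule bit_eqI)
  fix t
  show "bit k t \<longleftrightarrow> bit k' t"
  proof (cases "t < i")
    case True
    then have "bit_of i k (i - t) = bit_of i k' (i - t)" using assms(3) by auto
    with True show ?thesis unfolding bit_of_def by (simp add: bit_iff_odd odd_iff_mod_2_eq_one)
  next
    case False
    then have "k < 2 ^ t" "k' < 2 ^ t"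
      using assms(1,2) power_increasing[of i t "2::nat"] by linarith+
    then show ?thesis by (simp add: bit_iff_odd)
  qed
qed

text \<open>Every bit pattern occurs: k \<mapsto> bit_of i k is injective on the 2^i numbers below 2^i,
  and there are only 2^i patterns.\<close>

lemma bit_of_surj:
  assumes "\<forall>j\<in>{1..i}. \<beta> j < (2::nat)"
  obtains k where "k < 2 ^ i" "\<forall>j\<in>{1..i}. bit_of i k j = \<beta> j"
proof -
  define f where "f k = restrict (bit_of i k) {1..i}" for k
  define P where "P = PiE {1..i} (\<lambda>_. {..<2::nat})"
  have "f ` {..<2 ^ i} \<subseteq> P" unfolding f_def P_def by (auto simp: bit_of_less_2)
  moreover have "inj_on f {..<2 ^ i}"
  proof (rule inj_onI)
    fix k k' assume "k \<in> {..<2 ^ i}" "k' \<in> {..<2 ^ i}" "f k = f k'"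
    then show "k = k'"
      using bit_of_inject[of k i k'] unfolding f_def by (metis lessThan_iff restrict_apply')
  qed
  then have "card (f ` {..<2 ^ i}) = card P"
    unfolding P_def by (simp add: card_image card_PiE)
  ultimately have "f ` {..<2 ^ i} = P"
    by (intro card_subset_eq) (auto simp: P_def finite_PiE)
  moreover have "restrict \<beta> {1..i} \<in> P" unfolding P_def using assms by auto
  ultimately obtain k where "k < 2 ^ i" "f k = restrict \<beta> {1..i}" by force
  then show thesis using that unfolding f_def by (metis restrict_apply')
qed

lemma block_subset: "1 \<le> j \<Longrightarrow> block j b \<subseteq> {4 * j - 3..4 * j}"
  unfolding block_def by auto

lemma card_block [simp]: "card (block j b) = 2"
  unfolding block_def by auto

lemma block_prefix_counts:
  assumes "1 \<le> j"
  shows "prefix_count (block j b) (4 * j - 3) = (if b = 0 then 0 else 1)"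
    and "prefix_count (block j b) (4 * j - 1) = (if b = 0 then 2 else 1)"
proof -
  obtain j0 where j: "j = Suc j0" using assms by (cases j) auto
  have "{y\<in>block j b. y \<le> 4 * j - 3} = (if b = 0 then {} else {4 * j0 + 1})"
    "{y\<in>block j b. y \<le> 4 * j - 1} = (if b = 0 then block j b else {4 * j0 + 1})"
    unfolding block_def j by auto
  then show "prefix_count (block j b) (4 * j - 3) = (if b = 0 then 0 else 1)"
    and "prefix_count (block j b) (4 * j - 1) = (if b = 0 then 2 else 1)"
    unfolding prefix_count_def by simp_all
qed

lemma block_prefix_count_le_imp_eq:
  assumes "1 \<le> j" "b < 2" "b' < 2"
    and "\<forall>x\<in>{4 * j - 3..4 * j}. prefix_count (block j b') x \<le> prefix_count (block j b) x"
  shows "b = b'"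
proof -
  have "4 * j - 3 \<in> {4 * j - 3..4 * j}" "4 * j - 1 \<in> {4 * j - 3..4 * j}" using assms(1) by auto
  then have "prefix_count (block j b') (4 * j - 3) \<le> prefix_count (block j b) (4 * j - 3)"
    "prefix_count (block j b') (4 * j - 1) \<le> prefix_count (block j b) (4 * j - 1)"
    using assms(4) by blast+
  moreover have "b = 0 \<or> b = 1" "b' = 0 \<or> b' = 1" using assms(2,3) by auto
  ultimately show ?thesis using block_prefix_counts[OF assms(1)] by auto
qed

lemma mem_S_ki: "y \<in> S_ki k i \<longleftrightarrow> (\<exists>j\<in>{1..i}. y \<in> block j (bit_of i k j))"
  unfolding S_ki_def by auto

lemma S_ki_subset: "S_ki k i \<subseteq> {1..4 * i}"
  unfolding S_ki_def using block_subset by fastforce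

lemma prefix_count_S_ki_split:
  assumes j: "j \<in> {1..i}" and x: "4 * j - 3 \<le> x" "x \<le> 4 * j"
  shows "prefix_count (S_ki k i) x
           = prefix_count (S_ki k i) (4 * (j - 1)) + prefix_count (block j (bit_of i k j)) x"
proof -
  have window: "j' = j" if "j' \<in> {1..i}" "y \<in> block j' (bit_of i k j')" "4 * (j - 1) < y" "y \<le> x"
    for j' y
    using block_subset[of j'] that x by fastforce
  have "{y\<in>S_ki k i. y \<le> x}
      = {y\<in>S_ki k i. y \<le> 4 * (j - 1)} \<union> {y\<in>block j (bit_of i k j). y \<le> x}"
  proof (rule set_eqI, rule iffI)
    fix y assume y: "y \<in> {y\<in>S_ki k i. y \<le> x}"
    then obtain j' where "j' \<in> {1..i}" "y \<in> block j' (bit_of i k j')" by (auto simp: mem_S_ki)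
    then show "y \<in> {y\<in>S_ki k i. y \<le> 4 * (j - 1)} \<union> {y\<in>block j (bit_of i k j). y \<le> x}"
      using y window[of j' y] by (cases "y \<le> 4 * (j - 1)") auto
  qed (use j x in \<open>auto simp: mem_S_ki\<close>)
  moreover have "{y\<in>S_ki k i. y \<le> 4 * (j - 1)} \<inter> {y\<in>block j (bit_of i k j). y \<le> x} = {}"
    using block_subset[of j] j by fastforce
  ultimately show ?thesis
    unfolding prefix_count_def by (simp add: card_Un_disjoint)
qed

lemma prefix_count_S_ki_block_end: "j \<le> i \<Longrightarrow> prefix_count (S_ki k i) (4 * j) = 2 * j"
proof (induction j)
  case 0
  have "{y\<in>S_ki k i. y \<le> 0} = {}" using S_ki_subset by fastforce
  then show ?case unfolding prefix_count_def by simp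
next
  case (Suc j)
  have "{y\<in>block (Suc j) b. y \<le> 4 * Suc j} = block (Suc j) b" for b
    using block_subset[of "Suc j" b] by auto
  then show ?case
    using prefix_count_S_ki_split[of "Suc j" i "4 * Suc j" k] Suc
    by (simp add: prefix_count_def)
qed

lemma prefix_count_S_ki:
  assumes "j \<in> {1..i}" "x \<in> {4 * j - 3..4 * j}"
  shows "prefix_count (S_ki k i) x = 2 * (j - 1) + prefix_count (block j (bit_of i k j)) x"
  using prefix_count_S_ki_split[of j i x k] prefix_count_S_ki_block_end[of "j - 1" i k] assms
  by auto

lemma prefix_count_S_ki_le_imp_eq:
  assumes "k < 2 ^ i" "k' < 2 ^ i" "\<forall>x. prefix_count (S_ki k' i) x \<le> prefix_count (S_ki k i) x"
  shows "k = k'"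
proof (rule bit_of_inject[OF assms(1,2)], rule ballI)
  fix j assume j: "j \<in> {1..i}"
  then have "\<forall>x\<in>{4 * j - 3..4 * j}.
      prefix_count (block j (bit_of i k' j)) x \<le> prefix_count (block j (bit_of i k j)) x"
    using assms(3) prefix_count_S_ki[OF j] by (metis add_le_cancel_left)
  then show "bit_of i k j = bit_of i k' j"
    using block_prefix_count_le_imp_eq bit_of_less_2 j by auto
qed

text \<open>The summand 2 (j - 1) counts the players of S_{k,i} in the blocks before block j.\<close>

definition block_condition :: "nat \<Rightarrow> (nat \<Rightarrow> nat) \<Rightarrow> bool" where
  "block_condition j f \<longleftrightarrow>
     (\<exists>b<2. \<forall>x\<in>{4 * j - 3..4 * j}. 2 * (j - 1) + prefix_count (block j b) x \<le> f x)"

lemma block_condition_cong: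
  "(\<And>x. x \<in> {4 * j - 3..4 * j} \<Longrightarrow> f x = g x) \<Longrightarrow> block_condition j f = block_condition j g"
  unfolding block_condition_def by auto

lemma prefix_count_eq_card: "A \<subseteq> {..x} \<Longrightarrow> prefix_count A x = card A"
  unfolding prefix_count_def by (rule arg_cong[where f = card]) auto

lemma S_ki_prefix_count_le_if_inside:
  assumes inside: "\<forall>x\<in>{1..4 * i}. prefix_count (S_ki k i) x \<le> prefix_count S x"
  shows "prefix_count (S_ki k i) x \<le> prefix_count S x"
proof -
  consider "x = 0 \<or> i = 0" | "x \<in> {1..4 * i}" | "4 * i < x" "1 \<le> i"
    by (cases "x = 0"; cases "i = 0"; cases "x \<le> 4 * i") auto
  then show ?thesis
  proof cases
    case 1
    then have "{y\<in>S_ki k i. y \<le> x} = {}" using S_ki_subset[of k i] by fastforce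
    then show ?thesis unfolding prefix_count_def by (metis card.empty zero_le)
  next
    case 3
    then have "S_ki k i \<subseteq> {..x}" "S_ki k i \<subseteq> {..4 * i}" using S_ki_subset[of k i] by auto
    then have "prefix_count (S_ki k i) x = prefix_count (S_ki k i) (4 * i)"
      by (simp add: prefix_count_eq_card)
    also have "\<dots> \<le> prefix_count S (4 * i)" using inside 3 by simp
    also have "\<dots> \<le> prefix_count S x" using 3 prefix_count_mono_bound by simp
    finally show ?thesis .
  qed (use inside in blast)
qed

lemma G_ibit_imp_S_ki_prefix_count_le:
  assumes "G_ibit i S"
  obtains k where "k < 2 ^ i" "\<forall>x. prefix_count (S_ki k i) x \<le> prefix_count S x"
proof -
  obtain k T where k: "k < 2 ^ i" "T = S_ki k i \<or> left_shift (4 * i) (S_ki k i) T" "T \<subseteq> S"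
    using assms unfolding G_ibit_def by blast
  have "prefix_count (S_ki k i) x \<le> prefix_count S x" for x
    using k(2) left_shift_prefix_count[of "4 * i" "S_ki k i" T x] prefix_count_mono[OF k(3), of x]
    by auto
  then show thesis using that k(1) by blast
qed

lemma G_ibit_imp_block_condition:
  assumes "G_ibit i S" "j \<in> {1..i}"
  shows "block_condition j (prefix_count S)"
proof -
  obtain k where "\<forall>x. prefix_count (S_ki k i) x \<le> prefix_count S x"
    using G_ibit_imp_S_ki_prefix_count_le[OF assms(1)] by blast
  then show ?thesis
    unfolding block_condition_def using prefix_count_S_ki[OF assms(2)] bit_of_less_2
    by (intro exI[of _ "bit_of i k j"]) (metis atLeastAtMost_iff)
qed

lemma block_conditions_imp_G_ibit:
  assumes S: "S \<subseteq> players (4 * i)"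
    and blocks: "\<forall>j\<in>{1..i}. block_condition j (prefix_count S)"
  shows "G_ibit i S"
proof -
  have "\<forall>j\<in>{1..i}. \<exists>b. b < 2 \<and>
      (\<forall>x\<in>{4 * j - 3..4 * j}. 2 * (j - 1) + prefix_count (block j b) x \<le> prefix_count S x)"
    using blocks unfolding block_condition_def by blast
  from bchoice[OF this] obtain \<beta> where \<beta>: "\<forall>j\<in>{1..i}. \<beta> j < 2 \<and>
      (\<forall>x\<in>{4 * j - 3..4 * j}. 2 * (j - 1) + prefix_count (block j (\<beta> j)) x \<le> prefix_count S x)"
    by (elim exE)
  then obtain k where k: "k < 2 ^ i" "\<forall>j\<in>{1..i}. bit_of i k j = \<beta> j"
    using bit_of_surj[of i \<beta>] by blast
  have "\<forall>x\<in>{1..4 * i}. prefix_count (S_ki k i) x \<le> prefix_count S x"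
  proof
    fix x assume x: "x \<in> {1..4 * i}"
    define j where "j = (x + 3) div 4"
    have j: "j \<in> {1..i}" "x \<in> {4 * j - 3..4 * j}" using x unfolding j_def by auto
    then show "prefix_count (S_ki k i) x \<le> prefix_count S x" using prefix_count_S_ki[OF j] \<beta> k(2) by simp
  qed
  then have "\<forall>x. prefix_count (S_ki k i) x \<le> prefix_count S x"
    using S_ki_prefix_count_le_if_inside by blast
  then obtain T where "T \<subseteq> S" "T = S_ki k i \<or> left_shift (4 * i) (S_ki k i) T"
    using prefix_count_le_imp_left_shift_subset[OF S_ki_subset S[unfolded players_def]] by blast
  then show ?thesis unfolding G_ibit_def using S k(1) by blast
qed

lemma S_ki_winning: "k < 2 ^ i \<Longrightarrow> G_ibit i (S_ki k i)"
  unfolding G_ibit_def players_def using S_ki_subset by blast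

lemma winning_below_S_ki_imp_prefix_count_eq:
  assumes "G_ibit i T" "k < 2 ^ i" "\<forall>x. prefix_count T x \<le> prefix_count (S_ki k i) x"
  shows "prefix_count T x = prefix_count (S_ki k i) x"
proof -
  obtain k' where k': "k' < 2 ^ i" "\<forall>x. prefix_count (S_ki k' i) x \<le> prefix_count T x"
    using G_ibit_imp_S_ki_prefix_count_le[OF assms(1)] by blast
  then have "k = k'"
    using prefix_count_S_ki_le_imp_eq[OF assms(2) k'(1)] assms(3) le_trans by blast
  then show ?thesis using k'(2) assms(3) le_antisym by blast
qed

lemma roof_coalition_G_ibit_iff:
  "roof_coalition (4 * i) (G_ibit i) R \<longleftrightarrow> (\<exists>k<2 ^ i. R = S_ki k i)"
proof
  assume "roof_coalition (4 * i) (G_ibit i) R"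
  then have R: "G_ibit i R" "R \<subseteq> players (4 * i)" and minimal: "\<forall>T. T \<subset> R \<longrightarrow> \<not> G_ibit i T"
    and right_losing: "\<forall>T. right_shift (4 * i) R T \<longrightarrow> \<not> G_ibit i T"
    unfolding roof_coalition_def by auto
  obtain k T where k: "k < 2 ^ i" "T = S_ki k i \<or> left_shift (4 * i) (S_ki k i) T" "T \<subseteq> R"
    using R(1) unfolding G_ibit_def by blast
  have "G_ibit i T" unfolding G_ibit_def using k R(2) by blast
  then have "T = R" using minimal k(3) by blast
  then show "\<exists>k<2 ^ i. R = S_ki k i"
    using k(1,2) left_shift_imp_right_shift right_losing S_ki_winning by blast
next
  assume "\<exists>k<2 ^ i. R = S_ki k i"
  then obtain k where k: "k < 2 ^ i" "R = S_ki k i" by blast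
  have "\<not> G_ibit i T" if psub: "T \<subset> R" for T
  proof
    assume "G_ibit i T"
    obtain m where "m \<in> R - T" using psub by blast
    then show False
      using prefix_count_psubset_less[OF psub] prefix_count_mono[OF psubset_imp_subset[OF psub]]
        winning_below_S_ki_imp_prefix_count_eq[OF \<open>G_ibit i T\<close> k(1)] k(2)
      by (metis less_irrefl)
  qed
  moreover have "\<not> G_ibit i T" if "right_shift (4 * i) R T" for T
  proof
    assume "G_ibit i T"
    then show False
      using right_shift_prefix_count[OF that] winning_below_S_ki_imp_prefix_count_eq[OF _ k(1)] k(2)
      by (metis less_irrefl)
  qed
  moreover have "R \<subseteq> players (4 * i)" using S_ki_subset k(2) unfolding players_def by blast
  ultimately show "roof_coalition (4 * i) (G_ibit i) R"
    unfolding roof_coalition_def using S_ki_winning[OF k(1)] k(2) by blast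
qed

lemma inj_on_S_ki: "inj_on (\<lambda>k. S_ki k i) {..<2 ^ i}"
  by (rule inj_onI) (simp add: prefix_count_S_ki_le_imp_eq)

lemma card_roof_coalitions: "card {R. roof_coalition (4 * i) (G_ibit i) R} = 2 ^ i"
proof -
  have "{R. roof_coalition (4 * i) (G_ibit i) R} = (\<lambda>k. S_ki k i) ` {..<2 ^ i}"
    using roof_coalition_G_ibit_iff by auto
  then show ?thesis using card_image[OF inj_on_S_ki] by simp
qed

lemma pred_closed_imp_initial_interval:
  fixes S :: "nat set"
  assumes closed: "\<forall>m\<in>S. 2 \<le> m \<longrightarrow> m \<le> N \<longrightarrow> m - 1 \<in> S"
  obtains a where "a \<le> N" "S \<inter> {1..N} = {1..a}"
proof (cases "S \<inter> {1..N} = {}")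
  case True
  then show thesis using that[of 0] by simp
next
  case False
  define a where "a = Max (S \<inter> {1..N})"
  have a: "a \<in> S" "1 \<le> a" "a \<le> N" using Max_in[OF _ False] unfolding a_def by auto
  have "y \<in> S" if "1 \<le> y" "y \<le> a" for y
    using that(2,1)
  proof (induction rule: inc_induct)
    case (step y)
    then have "Suc y \<in> S" "2 \<le> Suc y" "Suc y \<le> N" using a(3) by auto
    then show ?case using closed by fastforce
  qed (use a in simp)
  moreover have "y \<le> a" if "y \<in> S \<inter> {1..N}" for y
    using Max_ge[OF _ that] unfolding a_def by simp
  ultimately have "S \<inter> {1..N} = {1..a}" using a(3) by auto
  with a(3) show thesis by (rule that)
qed

context
  fixes i j :: nat and S :: "nat set"
  assumes ceiling: "ceiling_coalition (4 * i) (G_ibit i) S"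
    and j: "j \<in> {1..i}" and failing: "\<not> block_condition j (prefix_count S)"
begin

lemma ceiling_maximal: "m \<in> {1..4 * i} - S \<Longrightarrow> G_ibit i (insert m S)"
  using ceiling unfolding ceiling_coalition_def players_def by simp

lemma ceiling_left_shift_winning: "direct_left_shift (4 * i) S T \<Longrightarrow> G_ibit i T"
  using ceiling unfolding ceiling_coalition_def left_shift_def by (simp add: tranclp.r_into_trancl)

text \<open>Adding a player above the window of block j, or shifting a player below it, leaves
  the prefix counts on the window unchanged, so the result still fails block j.\<close>

lemma ceiling_tail_subset: "{4 * j + 1..4 * i} \<subseteq> S"
proof
  fix m assume m: "m \<in> {4 * j + 1..4 * i}"
  show "m \<in> S"
  proof (rule ccontr)
    assume "m \<notin> S"
    then have "G_ibit i (insert m S)"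
      using ceiling_maximal m j by simp
    moreover have "block_condition j (prefix_count (insert m S)) = block_condition j (prefix_count S)"
      by (rule block_condition_cong) (use m prefix_count_insert_above in auto)
    ultimately show False using G_ibit_imp_block_condition j failing by blast
  qed
qed

lemma ceiling_pred_closed_below: "\<forall>m\<in>S. 2 \<le> m \<longrightarrow> m \<le> 4 * j - 3 \<longrightarrow> m - 1 \<in> S"
proof (intro ballI impI, rule ccontr)
  fix m assume m: "m \<in> S" "2 \<le> m" "m \<le> 4 * j - 3" and gap: "m - 1 \<notin> S"
  define S' where "S' = insert (m - 1) (S - {m})"
  have "m \<le> 4 * i" using m j by auto
  then have "direct_left_shift (4 * i) S S'"
    unfolding direct_left_shift_def S'_def using m gap by blast
  then have "G_ibit i S'" by (rule ceiling_left_shift_winning)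
  moreover have "block_condition j (prefix_count S') = block_condition j (prefix_count S)"
  proof (rule block_condition_cong)
    fix x assume "x \<in> {4 * j - 3..4 * j}"
    then have "m - 1 \<le> x" "m \<le> x" using m(3) by auto
    then show "prefix_count S' x = prefix_count S x"
      using prefix_count_move[OF m(1) gap, of x] m(2,3) unfolding S'_def by auto
  qed
  ultimately show False using G_ibit_imp_block_condition j failing by blast
qed

end

lemma ceiling_coalition_G_ibit_shape:
  assumes ceiling: "ceiling_coalition (4 * i) (G_ibit i) S"
  obtains j a B where "j \<in> {1..i}" "a \<le> 4 * i" "B \<subseteq> {4 * j - 2..4 * j}"
    "S = {1..a} \<union> B \<union> {4 * j + 1..4 * i}"
proof -
  have S: "S \<subseteq> {1..4 * i}" "\<not> G_ibit i S"
    using ceiling unfolding ceiling_coalition_def players_def by auto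
  then have "\<not> (\<forall>j\<in>{1..i}. block_condition j (prefix_count S))"
    using block_conditions_imp_G_ibit[of S i] unfolding players_def by blast
  then obtain j where j: "j \<in> {1..i}" "\<not> block_condition j (prefix_count S)" by blast
  obtain a where a: "a \<le> 4 * j - 3" "S \<inter> {1..4 * j - 3} = {1..a}"
    using pred_closed_imp_initial_interval[OF ceiling_pred_closed_below[OF ceiling j]] by blast
  have shape: "S = {1..a} \<union> (S \<inter> {4 * j - 2..4 * j}) \<union> {4 * j + 1..4 * i}"
  proof (rule set_eqI)
    fix y
    have "y \<in> S \<longleftrightarrow> y \<in> S \<inter> {1..4 * j - 3} \<or> y \<in> S \<inter> {4 * j - 2..4 * j} \<or> y \<in> S \<inter> {4 * j + 1..4 * i}"
      using S(1) by auto
    then show "y \<in> S \<longleftrightarrow> y \<in> {1..a} \<union> (S \<inter> {4 * j - 2..4 * j}) \<union> {4 * j + 1..4 * i}"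
      unfolding a(2) using ceiling_tail_subset[OF ceiling j] by blast
  qed
  have "a \<le> 4 * i" using a(1) j(1) by auto
  from that[OF j(1) this Int_lower2 shape] show thesis .
qed

lemma card_ceiling_coalitions_le:
  "card {S. ceiling_coalition (4 * i) (G_ibit i) S} \<le> 8 * i * (4 * i + 1)"
proof -
  define D where "D = (SIGMA j:{1..i}. {0..4 * i} \<times> Pow {4 * j - 2..4 * j})"
  define F where "F = (\<lambda>(j, a, B). {1..a} \<union> B \<union> {4 * j + 1..4 * i})"
  have "{S. ceiling_coalition (4 * i) (G_ibit i) S} \<subseteq> F ` D"
  proof
    fix S assume "S \<in> {S. ceiling_coalition (4 * i) (G_ibit i) S}"
    then obtain j a B where "j \<in> {1..i}" "a \<le> 4 * i" "B \<subseteq> {4 * j - 2..4 * j}"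
      "S = {1..a} \<union> B \<union> {4 * j + 1..4 * i}"
      by (elim CollectE ceiling_coalition_G_ibit_shape)
    then show "S \<in> F ` D" unfolding F_def D_def by (intro image_eqI[of _ _ "(j, a, B)"]) simp_all
  qed
  moreover have "finite D" unfolding D_def by (intro finite_SigmaI finite_cartesian_product) auto
  ultimately have "card {S. ceiling_coalition (4 * i) (G_ibit i) S} \<le> card (F ` D)"
    by (intro card_mono finite_imageI)
  also have "\<dots> \<le> card D" using \<open>finite D\<close> by (rule card_image_le)
  also have "card D = (\<Sum>j\<in>{1..i}. (4 * i + 1) * 8)"
    unfolding D_def
    by (subst card_SigmaI) (auto intro!: sum.cong simp: card_cartesian_product card_Pow)
  also have "\<dots> = 8 * i * (4 * i + 1)" by (simp add: algebra_simps)
  finally show ?thesis .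
qed

theorem corollary3:
  "\<exists>c::real. c > 0 \<and>
     (\<forall>i::nat. i \<ge> 1 \<longrightarrow>
        real (card {S. ceiling_coalition (4 * i) (G_ibit i) S}) \<le> c * real (4 * i) ^ 5
        \<and> card {S. roof_coalition (4 * i) (G_ibit i) S} = 2 ^ i)"
proof (intro exI[of _ 1] conjI allI impI)
  fix i :: nat assume "i \<ge> 1"
  then have "8 * i * (4 * i + 1) \<le> 40 * i ^ 2" by (simp add: power2_eq_square)
  also have "\<dots> \<le> 40 * i ^ 5" using \<open>i \<ge> 1\<close> by (simp add: power_increasing)
  also have "\<dots> \<le> (4 * i) ^ 5" by (simp add: power_mult_distrib)
  finally have "card {S. ceiling_coalition (4 * i) (G_ibit i) S} \<le> (4 * i) ^ 5"
    using card_ceiling_coalitions_le[of i] by linarith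
  then show "real (card {S. ceiling_coalition (4 * i) (G_ibit i) S}) \<le> 1 * real (4 * i) ^ 5"
    by (metis mult_1 of_nat_le_iff of_nat_power)
qed (simp_all add: card_roof_coalitions)

end
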